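(* Let $G$ be a finite abelian group and $M$ a finite $\hat G$-linear inverse monoid. Then $M$ is left inductive and right inductive.
   Context: $\hat G=G\sqcup\{0\}$ with $0$ absorbing. $\mathrm{Vect}_{\hat G}$: objects are finite pointed sets with an action of $\hat G$ ($0v=0$, $g0=0$) such that $G$ acts freely on nonzero elements; morphisms $f$ satisfy $f(0)=0$, $f(gv)=gf(v)$, $f(v_1)=f(v_2)\neq0\Rightarrow Gv_1=Gv_2$. A $\hat G$-linear monoid is a finite monoid $M$ with absorbing element $0_M$ containing $G$ as a subgroup of units commuting with all of $M$, with $G$ acting freely by translation on $M\setminus\{0_M\}$. $M$ is inverse if each $x$ has a unique $x^*$ with $xx^*x=x$, $x^*xx^*=x^*$. For $a\in M$: $J(a)=MaM$, $I(a)=\{x\in J(a):MxM\neq J(a)\}$, $P(a)=(J(a)\setminus I(a))\cup\{0\}$, with left translation $m\cdot x=mx$ if $mx\in J(a)\setminus I(a)$, else $0$, and right translation analogously. $M$ is left (resp. right) inductive if for every idempotent $e$, every left (resp. right) translation on $P(e)$ is a morphism of $\mathrm{Vect}_{\hat G}$ (so $P(e)$ is a $\hat G$-linear representation of $M$, resp. $M^{\mathrm{op}}$). *)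

theory Defs
  imports Main
begin

text \<open>The group G is a subset of M
  (a subgroup of the units of M). The hat-G action on M is by multiplication, where
  the extra absorbing element 0 of hat-G acts as 0_M.\<close>

definition finite_monoid_with_zero :: "'m set \<Rightarrow> ('m \<Rightarrow> 'm \<Rightarrow> 'm) \<Rightarrow> 'm \<Rightarrow> 'm \<Rightarrow> bool" where
  "finite_monoid_with_zero M mult one zero \<longleftrightarrow>
     finite M \<and> one \<in> M \<and> zero \<in> M \<and>
     (\<forall>x\<in>M. \<forall>y\<in>M. mult x y \<in> M) \<and>
     (\<forall>x\<in>M. \<forall>y\<in>M. \<forall>z\<in>M. mult (mult x y) z = mult x (mult y z)) \<and>
     (\<forall>x\<in>M. mult one x = x \<and> mult x one = x) \<and>
     (\<forall>x\<in>M. mult zero x = zero \<and> mult x zero = zero)"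

definition finite_abelian_subgroup_of_units :: "'m set \<Rightarrow> ('m \<Rightarrow> 'm \<Rightarrow> 'm) \<Rightarrow> 'm \<Rightarrow> 'm set \<Rightarrow> bool" where
  "finite_abelian_subgroup_of_units M mult one G \<longleftrightarrow>
     finite G \<and> G \<subseteq> M \<and> one \<in> G \<and>
     (\<forall>g\<in>G. \<forall>h\<in>G. mult g h \<in> G) \<and>
     (\<forall>g\<in>G. \<exists>h\<in>G. mult g h = one \<and> mult h g = one) \<and>
     (\<forall>g\<in>G. \<forall>h\<in>G. mult g h = mult h g)"

definition hatG_linear_monoid :: "'m set \<Rightarrow> ('m \<Rightarrow> 'm \<Rightarrow> 'm) \<Rightarrow> 'm \<Rightarrow> 'm \<Rightarrow> 'm set \<Rightarrow> bool" where
  "hatG_linear_monoid M mult one zero G \<longleftrightarrow>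
     finite_monoid_with_zero M mult one zero \<and>
     finite_abelian_subgroup_of_units M mult one G \<and>
     (\<forall>g\<in>G. \<forall>x\<in>M. mult g x = mult x g) \<and>
     (\<forall>g\<in>G. \<forall>x\<in>M - {zero}. mult g x = x \<longrightarrow> g = one)"

definition inverse_monoid :: "'m set \<Rightarrow> ('m \<Rightarrow> 'm \<Rightarrow> 'm) \<Rightarrow> bool" where
  "inverse_monoid M mult \<longleftrightarrow>
     (\<forall>x\<in>M. \<exists>!y. y \<in> M \<and> mult (mult x y) x = x \<and> mult (mult y x) y = y)"

definition idempotent :: "'m set \<Rightarrow> ('m \<Rightarrow> 'm \<Rightarrow> 'm) \<Rightarrow> 'm \<Rightarrow> bool" where
  "idempotent M mult e \<longleftrightarrow> e \<in> M \<and> mult e e = e"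

definition Jideal :: "'m set \<Rightarrow> ('m \<Rightarrow> 'm \<Rightarrow> 'm) \<Rightarrow> 'm \<Rightarrow> 'm set" where
  "Jideal M mult a = {mult (mult x a) y | x y. x \<in> M \<and> y \<in> M}"

definition Iideal :: "'m set \<Rightarrow> ('m \<Rightarrow> 'm \<Rightarrow> 'm) \<Rightarrow> 'm \<Rightarrow> 'm set" where
  "Iideal M mult a = {x \<in> Jideal M mult a. Jideal M mult x \<noteq> Jideal M mult a}"

definition Pset :: "'m set \<Rightarrow> ('m \<Rightarrow> 'm \<Rightarrow> 'm) \<Rightarrow> 'm \<Rightarrow> 'm \<Rightarrow> 'm set" where
  "Pset M mult zero a = (Jideal M mult a - Iideal M mult a) \<union> {zero}"

definition ltrans :: "'m set \<Rightarrow> ('m \<Rightarrow> 'm \<Rightarrow> 'm) \<Rightarrow> 'm \<Rightarrow> 'm \<Rightarrow> 'm \<Rightarrow> 'm \<Rightarrow> 'm" where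
  "ltrans M mult zero a m x =
     (if x = zero then zero
      else if mult m x \<in> Jideal M mult a - Iideal M mult a then mult m x else zero)"

definition rtrans :: "'m set \<Rightarrow> ('m \<Rightarrow> 'm \<Rightarrow> 'm) \<Rightarrow> 'm \<Rightarrow> 'm \<Rightarrow> 'm \<Rightarrow> 'm \<Rightarrow> 'm" where
  "rtrans M mult zero a m x =
     (if x = zero then zero
      else if mult x m \<in> Jideal M mult a - Iideal M mult a then mult x m else zero)"

definition vect_obj :: "('m \<Rightarrow> 'm \<Rightarrow> 'm) \<Rightarrow> 'm \<Rightarrow> 'm \<Rightarrow> 'm set \<Rightarrow> 'm set \<Rightarrow> bool" where
  "vect_obj mult one zero G P \<longleftrightarrow>
     finite P \<and> zero \<in> P \<and>
     (\<forall>g\<in>insert zero G. \<forall>v\<in>P. mult g v \<in> P) \<and>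
     (\<forall>v\<in>P. mult zero v = zero) \<and>
     (\<forall>g\<in>insert zero G. mult g zero = zero) \<and>
     (\<forall>v\<in>P. mult one v = v) \<and>
     (\<forall>g\<in>G. \<forall>h\<in>G. \<forall>v\<in>P. mult g (mult h v) = mult (mult g h) v) \<and>
     (\<forall>g\<in>G. \<forall>v\<in>P - {zero}. mult g v = v \<longrightarrow> g = one)"

definition orbit :: "('m \<Rightarrow> 'm \<Rightarrow> 'm) \<Rightarrow> 'm set \<Rightarrow> 'm \<Rightarrow> 'm set" where
  "orbit mult G v = (\<lambda>g. mult g v) ` G"

definition vect_mor :: "('m \<Rightarrow> 'm \<Rightarrow> 'm) \<Rightarrow> 'm \<Rightarrow> 'm set \<Rightarrow> 'm set \<Rightarrow> ('m \<Rightarrow> 'm) \<Rightarrow> bool" where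
  "vect_mor mult zero G P f \<longleftrightarrow>
     (\<forall>v\<in>P. f v \<in> P) \<and>
     f zero = zero \<and>
     (\<forall>g\<in>insert zero G. \<forall>v\<in>P. f (mult g v) = mult g (f v)) \<and>
     (\<forall>v1\<in>P. \<forall>v2\<in>P. f v1 = f v2 \<and> f v1 \<noteq> zero \<longrightarrow> orbit mult G v1 = orbit mult G v2)"

definition left_inductive :: "'m set \<Rightarrow> ('m \<Rightarrow> 'm \<Rightarrow> 'm) \<Rightarrow> 'm \<Rightarrow> 'm \<Rightarrow> 'm set \<Rightarrow> bool" where
  "left_inductive M mult one zero G \<longleftrightarrow>
     (\<forall>e. idempotent M mult e \<longrightarrow>
        vect_obj mult one zero G (Pset M mult zero e) \<and>
        (\<forall>m\<in>M. vect_mor mult zero G (Pset M mult zero e) (ltrans M mult zero e m)))"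

definition right_inductive :: "'m set \<Rightarrow> ('m \<Rightarrow> 'm \<Rightarrow> 'm) \<Rightarrow> 'm \<Rightarrow> 'm \<Rightarrow> 'm set \<Rightarrow> bool" where
  "right_inductive M mult one zero G \<longleftrightarrow>
     (\<forall>e. idempotent M mult e \<longrightarrow>
        vect_obj mult one zero G (Pset M mult zero e) \<and>
        (\<forall>m\<in>M. vect_mor mult zero G (Pset M mult zero e) (rtrans M mult zero e m)))"

end

(*
  In an inverse monoid the idempotents commute, hence (mv)* = v* m*.  In a finite monoid,
  if v lies in the two-sided ideal generated by mv then already v \<in> M(mv) (stability),
  and then the commutation of v v* with m* m gives v = m* m v.  So left translation by m is
  injective on those elements of a J-class that it maps back into the J-class, which is the
  morphism condition of Vect_{hat G}; right translations follow by passing to the opposite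
  monoid.  The central units G commute with translations and preserve J-classes.
*)

theory Submission
  imports Defs
begin

locale semigroup_on =
  fixes M :: "'m set" and mult :: "'m \<Rightarrow> 'm \<Rightarrow> 'm" (infixl "\<cdot>" 70)
  assumes closed [simp]: "x \<in> M \<Longrightarrow> y \<in> M \<Longrightarrow> x \<cdot> y \<in> M"
    and assoc [simp]: "x \<in> M \<Longrightarrow> y \<in> M \<Longrightarrow> z \<in> M \<Longrightarrow> x \<cdot> y \<cdot> z = x \<cdot> (y \<cdot> z)"
begin

text \<open>The simplifier normalises products to right-nested form; simp rules below are stated in
  that form.\<close>

abbreviation Jclass :: "'m \<Rightarrow> 'm set" where
  "Jclass a \<equiv> Jideal M mult a - Iideal M mult a"

lemma idempotent_absorb:
  assumes "e \<in> M" "e \<cdot> e = e" "x \<in> M"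
  shows "e \<cdot> (e \<cdot> x) = e \<cdot> x"
  using assms assoc[of e e x] by simp

lemma Jideal_subset: "a \<in> M \<Longrightarrow> Jideal M mult a \<subseteq> M"
  unfolding Jideal_def by auto

lemma Jideal_left_closed:
  assumes "a \<in> M" "x \<in> Jideal M mult a" "c \<in> M"
  shows "c \<cdot> x \<in> Jideal M mult a"
proof -
  obtain u v where "x = u \<cdot> a \<cdot> v" "u \<in> M" "v \<in> M"
    using assms(2) unfolding Jideal_def by blast
  then have "c \<cdot> x = (c \<cdot> u) \<cdot> a \<cdot> v" "c \<cdot> u \<in> M" using assms by simp_all
  then show ?thesis unfolding Jideal_def using \<open>v \<in> M\<close> by blast
qed

lemma Jideal_mono:
  assumes "a \<in> M" "x \<in> Jideal M mult a"
  shows "Jideal M mult x \<subseteq> Jideal M mult a"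
proof
  fix y assume "y \<in> Jideal M mult x"
  then obtain u v where y: "y = u \<cdot> x \<cdot> v" "u \<in> M" "v \<in> M" unfolding Jideal_def by blast
  obtain c d where x: "x = c \<cdot> a \<cdot> d" "c \<in> M" "d \<in> M"
    using assms(2) unfolding Jideal_def by blast
  have "y = (u \<cdot> c) \<cdot> a \<cdot> (d \<cdot> v)" using x y assms(1) by simp
  then show "y \<in> Jideal M mult a" unfolding Jideal_def using x y by fastforce
qed

lemma Jideal_opposite:
  assumes "a \<in> M"
  shows "Jideal M (\<lambda>x y. y \<cdot> x) a = Jideal M mult a"
proof -
  have "(\<exists>u v. x = v \<cdot> (a \<cdot> u) \<and> u \<in> M \<and> v \<in> M) \<longleftrightarrow>
        (\<exists>u v. x = u \<cdot> a \<cdot> v \<and> u \<in> M \<and> v \<in> M)" for x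
    using assms by (metis assoc)
  then show ?thesis unfolding Jideal_def by blast
qed

end

locale inverse_semigroup_on = semigroup_on +
  assumes unique_inverse: "x \<in> M \<Longrightarrow> \<exists>!y. y \<in> M \<and> x \<cdot> y \<cdot> x = x \<and> y \<cdot> x \<cdot> y = y"
begin

definition star where
  "star x = (THE y. y \<in> M \<and> x \<cdot> y \<cdot> x = x \<and> y \<cdot> x \<cdot> y = y)"

lemma star:
  assumes "x \<in> M"
  shows star_closed [simp]: "star x \<in> M"
    and star_left [simp]: "x \<cdot> (star x \<cdot> x) = x"
    and star_right [simp]: "star x \<cdot> (x \<cdot> star x) = star x"
proof -
  have "star x \<in> M \<and> x \<cdot> star x \<cdot> x = x \<and> star x \<cdot> x \<cdot> star x = star x"
    unfolding star_def by (rule theI'[OF unique_inverse[OF assms]])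
  then show "star x \<in> M" "x \<cdot> (star x \<cdot> x) = x" "star x \<cdot> (x \<cdot> star x) = star x"
    using assms by auto
qed

lemma star_left_assoc [simp]: "x \<in> M \<Longrightarrow> z \<in> M \<Longrightarrow> x \<cdot> (star x \<cdot> (x \<cdot> z)) = x \<cdot> z"
  and star_right_assoc [simp]:
    "x \<in> M \<Longrightarrow> z \<in> M \<Longrightarrow> star x \<cdot> (x \<cdot> (star x \<cdot> z)) = star x \<cdot> z"
  by (metis assoc closed star_closed star_left star_right)+

lemma star_unique:
  assumes "x \<in> M" "y \<in> M" "x \<cdot> y \<cdot> x = x" "y \<cdot> x \<cdot> y = y"
  shows "star x = y"
  unfolding star_def using assms by (intro the1_equality unique_inverse) auto

lemma star_star: "x \<in> M \<Longrightarrow> star (star x) = x"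
  by (intro star_unique) simp_all

lemma star_idempotent: "e \<in> M \<Longrightarrow> e \<cdot> e = e \<Longrightarrow> star e = e"
  by (intro star_unique) simp_all

lemma mult_idempotents_idempotent:
  assumes e: "e \<in> M" "e \<cdot> e = e" and f: "f \<in> M" "f \<cdot> f = f"
  shows "e \<cdot> f \<cdot> (e \<cdot> f) = e \<cdot> f"
proof -
  define x where "x = star (e \<cdot> f)"
  have x: "x \<in> M" "e \<cdot> f \<cdot> x \<cdot> (e \<cdot> f) = e \<cdot> f" "x \<cdot> (e \<cdot> f) \<cdot> x = x"
    using e f star_left[of "e \<cdot> f"] star_right[of "e \<cdot> f"] unfolding x_def
    by (simp_all del: star_left star_right)
  have x_absorb: "x \<cdot> (e \<cdot> (f \<cdot> (x \<cdot> z))) = x \<cdot> z" if "z \<in> M" for z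
    using x e f that by (metis assoc closed)
  \<comment> \<open>\<open>f \<cdot> x \<cdot> e\<close> is another inverse of \<open>e \<cdot> f\<close>, so it equals \<open>x\<close>, which is therefore idempotent.\<close>
  have "star (e \<cdot> f) = f \<cdot> x \<cdot> e"
    using e f x by (intro star_unique) (simp_all add: idempotent_absorb x_absorb)
  then have fxe: "f \<cdot> (x \<cdot> e) = x" using e f x unfolding x_def by simp
  have "x \<cdot> x = (f \<cdot> (x \<cdot> e)) \<cdot> (f \<cdot> (x \<cdot> e))" using fxe by simp
  also have "\<dots> = f \<cdot> (x \<cdot> e)" using x e f by (simp add: x_absorb)
  also have "\<dots> = x" by (rule fxe)
  finally have xx: "x \<cdot> x = x" .
  have "e \<cdot> f = star x" using star_star e f unfolding x_def by simp
  also have "\<dots> = x" using star_idempotent x(1) xx .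
  finally show ?thesis using xx by simp
qed

lemma idempotents_commute:
  assumes e: "e \<in> M" "e \<cdot> e = e" and f: "f \<in> M" "f \<cdot> f = f"
  shows "e \<cdot> f = f \<cdot> e"
proof -
  have ef: "e \<cdot> f \<cdot> (e \<cdot> f) = e \<cdot> f" and fe: "f \<cdot> e \<cdot> (f \<cdot> e) = f \<cdot> e"
    using mult_idempotents_idempotent e f by blast+
  have "e \<cdot> f = star (e \<cdot> f)" using star_idempotent ef e f by simp
  also have "\<dots> = f \<cdot> e"
    using e f ef fe by (intro star_unique) (simp_all add: idempotent_absorb)
  finally show ?thesis .
qed

lemma star_projections_commute:
  assumes "m \<in> M" "v \<in> M" "z \<in> M"
  shows "v \<cdot> (star v \<cdot> (star m \<cdot> (m \<cdot> z))) = star m \<cdot> (m \<cdot> (v \<cdot> (star v \<cdot> z)))"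
proof -
  have "v \<cdot> star v \<cdot> (star m \<cdot> m) = star m \<cdot> m \<cdot> (v \<cdot> star v)"
    using assms by (intro idempotents_commute) simp_all
  then have "v \<cdot> star v \<cdot> (star m \<cdot> m) \<cdot> z = star m \<cdot> m \<cdot> (v \<cdot> star v) \<cdot> z"
    by (rule arg_cong)
  then show ?thesis using assms by simp
qed

lemma star_mult:
  assumes "m \<in> M" "v \<in> M"
  shows "star (m \<cdot> v) = star v \<cdot> star m"
proof (rule star_unique)
  show "m \<cdot> v \<cdot> (star v \<cdot> star m) \<cdot> (m \<cdot> v) = m \<cdot> v"
    using assms by (simp add: star_projections_commute)
  show "star v \<cdot> star m \<cdot> (m \<cdot> v) \<cdot> (star v \<cdot> star m) = star v \<cdot> star m"
    using assms by (simp add: star_projections_commute[symmetric])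
qed (use assms in simp_all)

lemma star_cancel_left:
  assumes m: "m \<in> M" and v: "v \<in> M" and t: "t \<in> M" and vt: "v = t \<cdot> (m \<cdot> v)"
  shows "star m \<cdot> (m \<cdot> v) = v"
proof -
  define s where "s = m \<cdot> v"
  have s: "s \<in> M" "v = t \<cdot> s" using m v vt unfolding s_def by simp_all
  have "v = t \<cdot> (s \<cdot> (star s \<cdot> s))" using s by simp
  also have "\<dots> = v \<cdot> (star s \<cdot> s)" using s t by simp
  also have "\<dots> = v \<cdot> (star v \<cdot> (star m \<cdot> (m \<cdot> v)))"
    using m v unfolding s_def by (simp add: star_mult)
  also have "\<dots> = star m \<cdot> (m \<cdot> v)" using m v by (simp add: star_projections_commute)
  finally show ?thesis ..
qed

end

locale finite_monoid_on = semigroup_on +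
  fixes one
  assumes one_closed [simp]: "one \<in> M"
    and left_one [simp]: "x \<in> M \<Longrightarrow> one \<cdot> x = x"
    and right_one [simp]: "x \<in> M \<Longrightarrow> x \<cdot> one = x"
    and finite_carrier: "finite M"
begin

lemma Jideal_self: "a \<in> M \<Longrightarrow> a \<in> Jideal M mult a"
  unfolding Jideal_def by (auto intro!: exI[of _ one])

lemma Jclass_iff: "x \<in> M \<Longrightarrow> x \<in> Jclass a \<longleftrightarrow> Jideal M mult x = Jideal M mult a"
  unfolding Iideal_def using Jideal_self[of x] by auto

lemma stable_left:
  assumes m: "m \<in> M" and v: "v \<in> M" and J: "v \<in> Jideal M mult (m \<cdot> v)"
  shows "\<exists>t\<in>M. v = t \<cdot> (m \<cdot> v)"
proof -
  let ?Mmv = "(\<lambda>z. z \<cdot> (m \<cdot> v)) ` M" and ?Mv = "(\<lambda>z. z \<cdot> v) ` M"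
  obtain a b where ab: "v = a \<cdot> (m \<cdot> v) \<cdot> b" "a \<in> M" "b \<in> M"
    using J unfolding Jideal_def by blast
  have "?Mmv \<subseteq> ?Mv"
  proof
    fix x assume "x \<in> ?Mmv"
    then obtain z where z: "z \<in> M" "x = z \<cdot> (m \<cdot> v)" by blast
    then have "x = (z \<cdot> m) \<cdot> v" using m v by simp
    then show "x \<in> ?Mv" using z m by (blast intro: closed)
  qed
  moreover have "?Mv \<subseteq> (\<lambda>w. w \<cdot> b) ` ?Mmv"
  proof
    fix x assume "x \<in> ?Mv"
    then obtain z where z: "z \<in> M" "x = z \<cdot> v" by blast
    then have "x = z \<cdot> (a \<cdot> (m \<cdot> v) \<cdot> b)" using ab(1) by simp
    also have "\<dots> = ((z \<cdot> a) \<cdot> (m \<cdot> v)) \<cdot> b" using ab z m v by simp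
    finally show "x \<in> (\<lambda>w. w \<cdot> b) ` ?Mmv" using ab z by (blast intro: closed)
  qed
  \<comment> \<open>\<open>M(mv) \<subseteq> Mv \<subseteq> M(mv)b\<close>, so finiteness forces \<open>M(mv) = Mv \<ni> v\<close>.\<close>
  then have "card ?Mv \<le> card ?Mmv"
    using finite_carrier by (meson card_image_le card_mono finite_imageI order_trans)
  ultimately have "?Mmv = ?Mv" using finite_carrier by (intro card_seteq) simp_all
  moreover have "v \<in> ?Mv" using v by (auto intro!: image_eqI[of _ _ one])
  ultimately show ?thesis by auto
qed

end

locale finite_inverse_monoid_on = finite_monoid_on + inverse_semigroup_on
begin

lemma left_translation_injective:
  assumes "m \<in> M" "v \<in> M" "w \<in> M" "v \<in> Jideal M mult (m \<cdot> v)" "w \<in> Jideal M mult (m \<cdot> w)"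
    and "m \<cdot> v = m \<cdot> w"
  shows "v = w"
  using stable_left[of m v] stable_left[of m w] star_cancel_left[of m v] star_cancel_left[of m w]
    assms by metis

lemma opposite: "finite_inverse_monoid_on M (\<lambda>x y. y \<cdot> x) one"
proof unfold_locales
  fix x assume "x \<in> M"
  then have "y \<in> M \<and> x \<cdot> (y \<cdot> x) = x \<and> y \<cdot> (x \<cdot> y) = y \<longleftrightarrow>
      y \<in> M \<and> x \<cdot> y \<cdot> x = x \<and> y \<cdot> x \<cdot> y = y" for y
    by auto
  then show "\<exists>!y. y \<in> M \<and> x \<cdot> (y \<cdot> x) = x \<and> y \<cdot> (x \<cdot> y) = y"
    using unique_inverse[OF \<open>x \<in> M\<close>] by simp
qed (simp_all add: finite_carrier)

lemma right_translation_injective: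
  assumes "m \<in> M" "v \<in> M" "w \<in> M" "v \<in> Jideal M mult (v \<cdot> m)" "w \<in> Jideal M mult (w \<cdot> m)"
    and "v \<cdot> m = w \<cdot> m"
  shows "v = w"
  using finite_inverse_monoid_on.left_translation_injective[OF opposite] assms
  by (simp add: Jideal_opposite)

end

locale inverse_monoid_with_central_units = finite_inverse_monoid_on M mult one
  for M and mult (infixl "\<cdot>" 70) and one +
  fixes zero and G
  assumes zero_closed [simp]: "zero \<in> M"
    and zero_left [simp]: "x \<in> M \<Longrightarrow> zero \<cdot> x = zero"
    and zero_right [simp]: "x \<in> M \<Longrightarrow> x \<cdot> zero = zero"
    and units_closed: "g \<in> G \<Longrightarrow> g \<in> M"
    and units_invertible: "g \<in> G \<Longrightarrow> \<exists>h\<in>M. h \<cdot> g = one"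
    and units_central: "g \<in> G \<Longrightarrow> x \<in> M \<Longrightarrow> g \<cdot> x = x \<cdot> g"
    and units_act_freely: "g \<in> G \<Longrightarrow> x \<in> M \<Longrightarrow> x \<noteq> zero \<Longrightarrow> g \<cdot> x = x \<Longrightarrow> g = one"
begin

lemma unit_mult_cancel:
  assumes "g \<in> G"
  obtains h where "h \<in> M" "\<And>x. x \<in> M \<Longrightarrow> h \<cdot> (g \<cdot> x) = x"
  using units_invertible[OF assms] units_closed[OF assms] by (metis assoc left_one)

lemma unit_mult_eq_zero_iff: "g \<in> G \<Longrightarrow> x \<in> M \<Longrightarrow> g \<cdot> x = zero \<longleftrightarrow> x = zero"
  by (metis unit_mult_cancel units_closed zero_right)

lemma Jideal_unit_mult:
  assumes g: "g \<in> G" and x: "x \<in> M"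
  shows "Jideal M mult (g \<cdot> x) = Jideal M mult x"
proof
  show "Jideal M mult (g \<cdot> x) \<subseteq> Jideal M mult x"
    using g x units_closed by (intro Jideal_mono Jideal_left_closed Jideal_self) simp_all
  obtain h where h: "h \<in> M" "h \<cdot> (g \<cdot> x) = x" using unit_mult_cancel[OF g] x by metis
  then show "Jideal M mult x \<subseteq> Jideal M mult (g \<cdot> x)"
    using g x units_closed Jideal_left_closed[OF _ Jideal_self, of "g \<cdot> x" h]
    by (intro Jideal_mono) simp_all
qed

lemma unit_mult_Jclass_iff: "g \<in> G \<Longrightarrow> x \<in> M \<Longrightarrow> g \<cdot> x \<in> Jclass a \<longleftrightarrow> x \<in> Jclass a"
  using Jclass_iff Jideal_unit_mult units_closed by simp

lemma Jclass_subset: "a \<in> M \<Longrightarrow> Jclass a \<subseteq> M"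
  using Jideal_subset by blast

lemma Jclass_in_Jideal: "a \<in> M \<Longrightarrow> x \<in> Jclass a \<Longrightarrow> y \<in> Jclass a \<Longrightarrow> x \<in> Jideal M mult y"
  using Jclass_iff Jclass_subset Jideal_self by (metis subsetD)

lemma Pset_eq: "Pset M mult zero a = insert zero (Jclass a)"
  unfolding Pset_def by blast

lemma vect_obj_Pset:
  assumes a: "a \<in> M"
  shows "vect_obj mult one zero G (Pset M mult zero a)"
proof -
  have P: "Pset M mult zero a \<subseteq> M" using Jclass_subset[OF a] unfolding Pset_eq by simp
  have "g \<cdot> v \<in> Pset M mult zero a" if "g \<in> insert zero G" "v \<in> Pset M mult zero a" for g v
  proof (cases "g = zero \<or> v = zero")
    case True
    then show ?thesis using that P units_closed by (auto simp: Pset_eq)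
  next
    case False
    then have "g \<in> G" "v \<in> Jclass a" "v \<in> M" using that P by (auto simp: Pset_eq)
    then show ?thesis using unit_mult_Jclass_iff by (simp add: Pset_eq)
  qed
  moreover have "finite (Pset M mult zero a)" using P finite_carrier by (rule finite_subset)
  moreover have "x \<in> M" if "x \<in> Jideal M mult a" for x using that Jideal_subset[OF a] by blast
  ultimately show ?thesis
    using P units_closed units_act_freely unfolding vect_obj_def by (fastforce simp: Pset_eq)
qed

lemma vect_mor_restricted_translation:
  assumes a: "a \<in> M"
    and closed: "\<And>x. x \<in> M \<Longrightarrow> \<phi> x \<in> M"
    and equivariant: "\<And>g x. g \<in> G \<Longrightarrow> x \<in> M \<Longrightarrow> \<phi> (g \<cdot> x) = g \<cdot> \<phi> x"
    and injective: "\<And>v w. v \<in> Jclass a \<Longrightarrow> w \<in> Jclass a \<Longrightarrow> \<phi> v \<in> Jclass a \<Longrightarrow> \<phi> w \<in> Jclass a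
      \<Longrightarrow> \<phi> v = \<phi> w \<Longrightarrow> v = w"
  shows "vect_mor mult zero G (Pset M mult zero a)
    (\<lambda>x. if x = zero then zero else if \<phi> x \<in> Jclass a then \<phi> x else zero)"
    (is "vect_mor mult zero G ?P ?f")
proof -
  have P: "?P \<subseteq> M" using Jclass_subset[OF a] unfolding Pset_eq by simp
  have "?f (g \<cdot> v) = g \<cdot> ?f v" if g: "g \<in> insert zero G" and v: "v \<in> ?P" for g v
  proof (cases "g = zero \<or> v = zero")
    case True
    then show ?thesis using g v P closed units_closed by auto
  next
    case False
    then have "g \<in> G" "v \<in> M" "v \<noteq> zero" using g v P by auto
    then show ?thesis
      using closed equivariant unit_mult_eq_zero_iff unit_mult_Jclass_iff units_closed by simp
  qed
  then show ?thesis
    using injective unfolding vect_mor_def by (auto simp: Pset_eq split: if_splits)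
qed

lemma vect_mor_ltrans:
  assumes a: "a \<in> M" and m: "m \<in> M"
  shows "vect_mor mult zero G (Pset M mult zero a) (ltrans M mult zero a m)"
proof -
  have "ltrans M mult zero a m = (\<lambda>x. if x = zero then zero else if m \<cdot> x \<in> Jclass a then m \<cdot> x else zero)"
    by (simp add: fun_eq_iff ltrans_def)
  moreover have "vect_mor mult zero G (Pset M mult zero a)
    (\<lambda>x. if x = zero then zero else if m \<cdot> x \<in> Jclass a then m \<cdot> x else zero)"
  proof (rule vect_mor_restricted_translation[OF a])
    fix g x assume g: "g \<in> G" and x: "x \<in> M"
    have "m \<cdot> (g \<cdot> x) = (m \<cdot> g) \<cdot> x" using m g x units_closed by simp
    also have "\<dots> = (g \<cdot> m) \<cdot> x" by (simp only: units_central[OF g m])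
    finally show "m \<cdot> (g \<cdot> x) = g \<cdot> (m \<cdot> x)" using m g x units_closed by simp
  next
    fix v w assume v: "v \<in> Jclass a" and w: "w \<in> Jclass a"
      and "m \<cdot> v \<in> Jclass a" "m \<cdot> w \<in> Jclass a" and eq: "m \<cdot> v = m \<cdot> w"
    then have "v \<in> Jideal M mult (m \<cdot> v)" "w \<in> Jideal M mult (m \<cdot> w)"
      by (simp_all add: Jclass_in_Jideal[OF a])
    moreover have "v \<in> M" "w \<in> M" using v w Jclass_subset[OF a] by auto
    ultimately show "v = w" using left_translation_injective[OF m _ _ _ _ eq] by blast
  qed (use m in simp)
  ultimately show ?thesis by simp
qed

lemma vect_mor_rtrans:
  assumes a: "a \<in> M" and m: "m \<in> M"
  shows "vect_mor mult zero G (Pset M mult zero a) (rtrans M mult zero a m)"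
proof -
  have "rtrans M mult zero a m = (\<lambda>x. if x = zero then zero else if x \<cdot> m \<in> Jclass a then x \<cdot> m else zero)"
    by (simp add: fun_eq_iff rtrans_def)
  moreover have "vect_mor mult zero G (Pset M mult zero a)
    (\<lambda>x. if x = zero then zero else if x \<cdot> m \<in> Jclass a then x \<cdot> m else zero)"
  proof (rule vect_mor_restricted_translation[OF a])
    fix v w assume v: "v \<in> Jclass a" and w: "w \<in> Jclass a"
      and "v \<cdot> m \<in> Jclass a" "w \<cdot> m \<in> Jclass a" and eq: "v \<cdot> m = w \<cdot> m"
    then have "v \<in> Jideal M mult (v \<cdot> m)" "w \<in> Jideal M mult (w \<cdot> m)"
      by (simp_all add: Jclass_in_Jideal[OF a])
    moreover have "v \<in> M" "w \<in> M" using v w Jclass_subset[OF a] by auto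
    ultimately show "v = w" using right_translation_injective[OF m _ _ _ _ eq] by blast
  qed (use m units_closed in simp_all)
  ultimately show ?thesis by simp
qed

end

lemma inverse_monoid_with_central_units_if_hatG_linear:
  assumes "hatG_linear_monoid M mult one zero G" and "inverse_monoid M mult"
  shows "inverse_monoid_with_central_units M mult one zero G"
proof -
  have monoid: "finite_monoid_with_zero M mult one zero"
    and units: "finite_abelian_subgroup_of_units M mult one G"
    and central_free: "\<forall>g\<in>G. \<forall>x\<in>M. mult g x = mult x g"
      "\<forall>g\<in>G. \<forall>x\<in>M - {zero}. mult g x = x \<longrightarrow> g = one"
    using assms(1) unfolding hatG_linear_monoid_def by blast+
  show ?thesis
  proof unfold_locales
    fix g assume "g \<in> G"
    then show "\<exists>h\<in>M. mult h g = one" using units unfolding finite_abelian_subgroup_of_units_def by blast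
  next
    fix g x assume "g \<in> G" "x \<in> M"
    then show "mult g x = mult x g" using central_free(1) by blast
  next
    fix g x assume "g \<in> G" "x \<in> M" "x \<noteq> zero" "mult g x = x"
    then show "g = one" using central_free(2) by blast
  qed (use monoid units central_free assms(2) in \<open>simp_all add: finite_monoid_with_zero_def
      finite_abelian_subgroup_of_units_def inverse_monoid_def subset_iff\<close>)
qed

theorem mainTheorem11:
  fixes M G :: "'m set" and mult :: "'m \<Rightarrow> 'm \<Rightarrow> 'm" and one zero :: 'm
  assumes "hatG_linear_monoid M mult one zero G"
    and "inverse_monoid M mult"
  shows "left_inductive M mult one zero G \<and> right_inductive M mult one zero G"
proof -
  interpret inverse_monoid_with_central_units M mult one zero G
    using assms by (rule inverse_monoid_with_central_units_if_hatG_linear)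
  show ?thesis
    unfolding left_inductive_def right_inductive_def idempotent_def
    using vect_obj_Pset vect_mor_ltrans vect_mor_rtrans by blast
qed

end
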